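(* Let $\phi_a,\phi_b,\phi_2\colon\mathbb{R}\to[0,\infty)$ be continuous probability density functions such that $\{\phi_a>0\}$, $\{\phi_b>0\}$ and $I_2=\{\phi_2>0\}$ are open intervals and $\inf\{\phi_a>0\}=\inf\{\phi_b>0\}=0$. Let $F_a,F_b,F_2$ be the corresponding cumulative distribution functions and suppose $F_a(t)\ge F_b(t)$ for all $t\in\mathbb{R}$. Put $K_a(x)=F_2^{-1}(F_a(x))$ for $x\in\{\phi_a>0\}$ and $K_b(x)=F_2^{-1}(F_b(x))$ for $x\in\{\phi_b>0\}$, where $F_2^{-1}$ is the inverse of $F_2$ restricted to $I_2$. Let $q\colon\mathbb{R}\to[0,\infty)$ be uniformly continuous and integrable, and define $$V_a=\int x\,\frac{\phi_a(x)}{\phi_2(K_a(x))}\,q(K_a(x))\,dx,\qquad V_b=\int x\,\frac{\phi_b(x)}{\phi_2(K_b(x))}\,q(K_b(x))\,dx,$$ the integrals taken over $\{\phi_a>0\}$ and $\{\phi_b>0\}$ respectively and assumed absolutely convergent. Then $V_a\le V_b$.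
   Context: Interpretation: $\phi_a,\phi_b$ are two candidate densities of a cash flow at horizon $T$ with the first stochastically dominated by the second, $\phi_2$ is the density of the terminal value of a traded benchmark security, $q$ its state price density, and $V_a,V_b$ are the values the valuation rule assigns to the two cash flows. *)

theory Defs
  imports "HOL-Analysis.Analysis"
begin

definition cont_pdf :: "(real \<Rightarrow> real) \<Rightarrow> bool" where
  "cont_pdf \<phi> \<longleftrightarrow> continuous_on UNIV \<phi> \<and> (\<forall>x. 0 \<le> \<phi> x) \<and> (\<phi> has_integral 1) UNIV"

definition cdf :: "(real \<Rightarrow> real) \<Rightarrow> real \<Rightarrow> real" where
  "cdf \<phi> t = integral {..t} \<phi>"

definition pos_set :: "(real \<Rightarrow> real) \<Rightarrow> real set" where
  "pos_set \<phi> = {x. \<phi> x > 0}"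

definition open_interval :: "real set \<Rightarrow> bool" where
  "open_interval S \<longleftrightarrow> is_interval S \<and> open S \<and> S \<noteq> {}"

definition Kmap :: "(real \<Rightarrow> real) \<Rightarrow> (real \<Rightarrow> real) \<Rightarrow> real \<Rightarrow> real" where
  "Kmap \<phi>2 \<phi> x = the_inv_into (pos_set \<phi>2) (cdf \<phi>2) (cdf \<phi> x)"

end

theory Submission
  imports Defs
begin

text \<open>
  The substitution \<open>u = F(x)\<close> turns each value into an integral over the unit interval,
  \<open>V = \<integral>\<^sub>0\<^sup>1 F\<^sup>-\<^sup>1(u) w(u) du\<close>, against the common weight \<open>w(u) = q(F\<^sub>2\<^sup>-\<^sup>1 u) / \<phi>\<^sub>2(F\<^sub>2\<^sup>-\<^sup>1 u) \<ge> 0\<close>.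
  Since \<open>F\<^sub>a \<ge> F\<^sub>b\<close> pointwise, the quantile functions satisfy \<open>F\<^sub>a\<^sup>-\<^sup>1 \<le> F\<^sub>b\<^sup>-\<^sup>1\<close> on \<open>(0,1)\<close>,
  and the inequality of the integrals follows.
\<close>

definition quantile :: "(real \<Rightarrow> real) \<Rightarrow> real \<Rightarrow> real" where
  "quantile \<phi> = the_inv_into (pos_set \<phi>) (cdf \<phi>)"

lemma Kmap_eq_quantile_cdf: "Kmap \<phi>2 \<phi> x = quantile \<phi>2 (cdf \<phi> x)"
  by (simp add: Kmap_def quantile_def)

context
  fixes \<phi> :: "real \<Rightarrow> real"
  assumes pdf: "cont_pdf \<phi>"
begin

lemma pdf_nonneg: "0 \<le> \<phi> x"
  using pdf by (simp add: cont_pdf_def)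

lemma pdf_eq_0_outside_pos_set: "x \<notin> pos_set \<phi> \<Longrightarrow> \<phi> x = 0"
  using pdf_nonneg[of x] by (simp add: pos_set_def)

lemma pdf_integrable_on:
  assumes "S \<in> sets lebesgue"
  shows "\<phi> integrable_on S"
proof -
  have "\<phi> absolutely_integrable_on UNIV"
    using pdf unfolding cont_pdf_def
    by (intro nonnegative_absolutely_integrable) (auto simp: integrable_on_def)
  then have "\<phi> absolutely_integrable_on S"
    using set_integrable_subset assms by blast
  then show ?thesis
    using set_lebesgue_integral_eq_integral(1) by blast
qed

lemma pdf_integrable_on_atMost: "\<phi> integrable_on {..t}"
  by (rule pdf_integrable_on) (simp add: borel_closed sets_completionI_sets)

lemma cdf_split:
  assumes "a \<le> t"
  shows "cdf \<phi> t = integral {..a} \<phi> + integral {a..t} \<phi>"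
proof -
  have "{..t} = {..a} \<union> {a..t}" "negligible ({..a} \<inter> {a..t})"
    using assms by auto
  moreover have "\<phi> integrable_on {a..t}"
    by (rule pdf_integrable_on) (simp add: borel_closed sets_completionI_sets)
  ultimately show ?thesis
    unfolding cdf_def by (simp add: pdf_integrable_on_atMost)
qed

lemma has_real_derivative_cdf: "(cdf \<phi> has_real_derivative \<phi> x) (at x)"
proof -
  have "continuous_on {x-1..x+1} \<phi>"
    using pdf continuous_on_subset unfolding cont_pdf_def by blast
  then have "((\<lambda>t. integral {..x-1} \<phi> + integral {x-1..t} \<phi>) has_real_derivative \<phi> x)
      (at x within {x-1..x+1})"
    using integral_has_real_derivative[of "x-1" "x+1" \<phi> x] by (auto intro!: derivative_eq_intros)
  then have "((\<lambda>t. integral {..x-1} \<phi> + integral {x-1..t} \<phi>) has_real_derivative \<phi> x) (at x)"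
    using at_within_interior[of x "{x-1..x+1}"] by simp
  then show ?thesis
    by (rule has_field_derivative_transform_within_open[where S="{x-1<..}"])
      (auto simp: cdf_split[of "x - 1"])
qed

lemma continuous_on_cdf: "continuous_on A (cdf \<phi>)"
  using has_real_derivative_cdf
  by (meson DERIV_continuous continuous_at_imp_continuous_on)

lemma cdf_mono:
  assumes "s \<le> t"
  shows "cdf \<phi> s \<le> cdf \<phi> t"
  using assms has_real_derivative_cdf pdf_nonneg by (metis DERIV_nonneg_imp_nondecreasing)

lemma cdf_strict_mono:
  assumes "s < t" and "\<And>x. s \<le> x \<Longrightarrow> x \<le> t \<Longrightarrow> \<phi> x > 0"
  shows "cdf \<phi> s < cdf \<phi> t"
  using assms has_real_derivative_cdf by (metis DERIV_pos_imp_increasing)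

lemma cdf_nonneg: "0 \<le> cdf \<phi> t"
  unfolding cdf_def using pdf_integrable_on_atMost pdf_nonneg by (rule integral_nonneg)

lemma cdf_le_1: "cdf \<phi> t \<le> 1"
proof -
  have "integral {..t} \<phi> \<le> integral UNIV \<phi>"
    using pdf pdf_integrable_on_atMost pdf_nonneg
    by (intro integral_subset_le) (auto simp: cont_pdf_def)
  then show ?thesis
    using pdf integral_unique unfolding cont_pdf_def cdf_def by metis
qed

lemma cdf_eq_0:
  assumes "\<And>x. x \<le> t \<Longrightarrow> \<phi> x = 0"
  shows "cdf \<phi> t = 0"
proof -
  have "integral {..t} \<phi> = integral {..t} (\<lambda>_. 0)"
    using assms by (intro integral_cong) simp
  then show ?thesis
    by (simp add: cdf_def)
qed

lemma cdf_eq_1: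
  assumes "\<And>x. t < x \<Longrightarrow> \<phi> x = 0"
  shows "cdf \<phi> t = 1"
proof -
  have "(\<phi> has_integral cdf \<phi> t) {..t}"
    unfolding cdf_def using pdf_integrable_on_atMost by blast
  then have "(\<phi> has_integral cdf \<phi> t) UNIV"
    by (rule has_integral_on_superset) (use assms in auto)
  then show ?thesis
    using pdf has_integral_unique unfolding cont_pdf_def by blast
qed

lemma cdf_tendsto_1: "(\<lambda>k. cdf \<phi> (real k)) \<longlonglongrightarrow> 1"
proof -
  define f where "f k x = (if x \<in> {..real k} then \<phi> x else 0)" for k x
  have integral_f: "integral UNIV (f k) = cdf \<phi> (real k)" for k
    unfolding cdf_def f_def by (rule integral_restrict_UNIV)
  have "\<phi> integrable_on UNIV \<and> ((\<lambda>k. integral UNIV (f k)) \<longlonglongrightarrow> integral UNIV \<phi>)"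
  proof (rule monotone_convergence_increasing)
    show "f k integrable_on UNIV" for k
      unfolding f_def using pdf_integrable_on_atMost integrable_restrict_UNIV by blast
    show "f k x \<le> f (Suc k) x" for k x
      by (simp add: f_def pdf_nonneg)
    show "(\<lambda>k. f k x) \<longlonglongrightarrow> \<phi> x" for x
    proof (rule tendsto_eventually)
      obtain N where "x \<le> real N"
        using real_arch_simple by blast
      then show "\<forall>\<^sub>F k in sequentially. f k x = \<phi> x"
        by (intro eventually_sequentiallyI[of N]) (auto simp: f_def)
    qed
    show "bounded (range (\<lambda>k. integral UNIV (f k)))"
      by (intro boundedI[of _ 1]) (auto simp: integral_f cdf_nonneg cdf_le_1)
  qed
  moreover have "integral UNIV \<phi> = 1"
    using pdf integral_unique unfolding cont_pdf_def by blast
  ultimately show ?thesis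
    by (simp add: integral_f)
qed

lemma cdf_exceeds:
  assumes "u < 1"
  obtains t where "u < cdf \<phi> t"
proof -
  have "\<forall>\<^sub>F k in sequentially. u < cdf \<phi> (real k)"
    using order_tendstoD(1)[OF cdf_tendsto_1] assms by simp
  then show ?thesis
    using that by (meson eventually_sequentially order_refl)
qed

context
  assumes open_pos: "open (pos_set \<phi>)"
begin

lemma cdf_strict_mono_through_pos_set:
  assumes "x \<in> pos_set \<phi>"
  shows "s < x \<Longrightarrow> cdf \<phi> s < cdf \<phi> x" and "x < t \<Longrightarrow> cdf \<phi> x < cdf \<phi> t"
proof -
  obtain e where "e > 0" and ball: "ball x e \<subseteq> pos_set \<phi>"
    using open_pos assms open_contains_ball by blast
  have pos: "\<phi> z > 0" if "\<bar>z - x\<bar> < e" for z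
    using ball that by (auto simp: pos_set_def dist_real_def subset_iff)
  show "cdf \<phi> s < cdf \<phi> x" if "s < x"
  proof -
    have "cdf \<phi> s \<le> cdf \<phi> (max s (x - e/2))"
      by (rule cdf_mono) simp
    also have "\<dots> < cdf \<phi> x"
      using \<open>e > 0\<close> that by (intro cdf_strict_mono pos) auto
    finally show ?thesis .
  qed
  show "cdf \<phi> x < cdf \<phi> t" if "x < t"
  proof -
    have "cdf \<phi> x < cdf \<phi> (min t (x + e/2))"
      using \<open>e > 0\<close> that by (intro cdf_strict_mono pos) auto
    also have "\<dots> \<le> cdf \<phi> t"
      by (rule cdf_mono) simp
    finally show ?thesis .
  qed
qed

lemma inj_on_cdf: "inj_on (cdf \<phi>) (pos_set \<phi>)"
proof (rule inj_onI)
  fix x y assume "x \<in> pos_set \<phi>" "y \<in> pos_set \<phi>" "cdf \<phi> x = cdf \<phi> y"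
  then show "x = y"
    using cdf_strict_mono_through_pos_set by (metis linorder_neqE_linordered_idom less_irrefl)
qed

lemma cdf_in_unit_interval:
  assumes "x \<in> pos_set \<phi>"
  shows "cdf \<phi> x \<in> {0<..<1}"
proof -
  have "cdf \<phi> (x - 1) < cdf \<phi> x" "cdf \<phi> x < cdf \<phi> (x + 1)"
    using cdf_strict_mono_through_pos_set[OF assms] by simp_all
  then show ?thesis
    using cdf_nonneg[of "x - 1"] cdf_le_1[of "x + 1"] by simp
qed

lemma quantile_cdf: "x \<in> pos_set \<phi> \<Longrightarrow> quantile \<phi> (cdf \<phi> x) = x"
  unfolding quantile_def using inj_on_cdf by (rule the_inv_into_f_f)

lemma quantile_substitution:
  assumes "(\<lambda>x. x * \<phi> x * g (cdf \<phi> x)) absolutely_integrable_on pos_set \<phi>"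
  shows "(\<lambda>u. quantile \<phi> u * g u) absolutely_integrable_on cdf \<phi> ` pos_set \<phi>"
    and "integral (cdf \<phi> ` pos_set \<phi>) (\<lambda>u. quantile \<phi> u * g u)
           = integral (pos_set \<phi>) (\<lambda>x. x * \<phi> x * g (cdf \<phi> x))"
proof -
  let ?h = "\<lambda>x. x * \<phi> x * g (cdf \<phi> x)"
  have lebesgue: "pos_set \<phi> \<in> sets lebesgue"
    using open_pos by (simp add: borel_open sets_completionI_sets)
  have "\<bar>\<phi> x\<bar> * (quantile \<phi> (cdf \<phi> x) * g (cdf \<phi> x)) = ?h x" if "x \<in> pos_set \<phi>" for x
    using that by (simp add: quantile_cdf pdf_nonneg)
  then have "(\<lambda>x. \<bar>\<phi> x\<bar> * (quantile \<phi> (cdf \<phi> x) * g (cdf \<phi> x))) absolutely_integrable_on pos_set \<phi>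
      \<and> integral (pos_set \<phi>) (\<lambda>x. \<bar>\<phi> x\<bar> * (quantile \<phi> (cdf \<phi> x) * g (cdf \<phi> x)))
          = integral (pos_set \<phi>) ?h"
    using assms set_integrable_cong[OF refl refl] integral_cong by (metis (no_types, lifting))
  then show "(\<lambda>u. quantile \<phi> u * g u) absolutely_integrable_on cdf \<phi> ` pos_set \<phi>"
    and "integral (cdf \<phi> ` pos_set \<phi>) (\<lambda>u. quantile \<phi> u * g u) = integral (pos_set \<phi>) ?h"
    using has_absolute_integral_change_of_variables_1'[OF lebesgue _ inj_on_cdf]
      has_field_derivative_at_within[OF has_real_derivative_cdf] by blast+
qed

end

context
  assumes interval: "open_interval (pos_set \<phi>)" and bdd: "bdd_below (pos_set \<phi>)"
begin

lemma image_cdf_pos_set: "cdf \<phi> ` pos_set \<phi> = {0<..<1}"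
proof
  have open_pos: "open (pos_set \<phi>)"
    using interval by (simp add: open_interval_def)
  then show "cdf \<phi> ` pos_set \<phi> \<subseteq> {0<..<1}"
    using cdf_in_unit_interval by blast
  define m where "m = Inf (pos_set \<phi>)"
  have ne: "pos_set \<phi> \<noteq> {}"
    using interval by (simp add: open_interval_def)
  have above_m: "m < z" if "z \<in> pos_set \<phi>" for z
  proof -
    obtain c where "\<forall>a\<in>pos_set \<phi>. c \<le> a"
      using bdd by (auto simp: bdd_below_def)
    then have "\<forall>a\<in>pos_set \<phi>. c - 1 < a"
      by fastforce
    then have "m \<notin> pos_set \<phi>"
      unfolding m_def using Inf_notin_open open_pos by blast
    then show ?thesis
      using that bdd cInf_lower[of z "pos_set \<phi>"] unfolding m_def
      by (metis order_le_imp_less_or_eq)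
  qed
  have "cdf \<phi> m = 0"
    using above_m by (intro cdf_eq_0 pdf_eq_0_outside_pos_set) (meson not_less)
  show "{0<..<1} \<subseteq> cdf \<phi> ` pos_set \<phi>"
  proof
    fix u :: real assume u: "u \<in> {0<..<1}"
    obtain t where "u < cdf \<phi> t"
      using cdf_exceeds u by auto
    moreover have "m \<le> t"
    proof (rule ccontr)
      assume "\<not> m \<le> t"
      then have "cdf \<phi> t \<le> cdf \<phi> m"
        by (intro cdf_mono) simp
      with \<open>u < cdf \<phi> t\<close> \<open>cdf \<phi> m = 0\<close> u show False
        by simp
    qed
    ultimately obtain x where x: "m \<le> x" "x \<le> t" "cdf \<phi> x = u"
      using IVT'[of "cdf \<phi>" m u t] \<open>cdf \<phi> m = 0\<close> u continuous_on_cdf by auto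
    have "x \<in> pos_set \<phi>"
    proof (rule ccontr)
      assume x_notin: "x \<notin> pos_set \<phi>"
      have "m < x"
        using x \<open>cdf \<phi> m = 0\<close> u by (cases "m = x") auto
      then obtain s where "s \<in> pos_set \<phi>" "s < x"
        using cInf_less_iff[OF ne bdd] by (auto simp: m_def)
      txt \<open>Then the whole support lies below \<open>x\<close>, so \<open>x\<close> already carries all the mass.\<close>
      have "\<phi> z = 0" if "x < z" for z
      proof (rule pdf_eq_0_outside_pos_set, rule notI)
        assume "z \<in> pos_set \<phi>"
        with \<open>s \<in> pos_set \<phi>\<close> \<open>s < x\<close> \<open>x < z\<close> interval have "x \<in> pos_set \<phi>"
          unfolding open_interval_def is_interval_1 by (meson less_imp_le)
        with x_notin show False ..
      qed
      then have "cdf \<phi> x = 1"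
        by (rule cdf_eq_1)
      then show False
        using x u by simp
    qed
    then show "u \<in> cdf \<phi> ` pos_set \<phi>"
      using x(3) by blast
  qed
qed

lemma quantile_in_pos_set: "u \<in> {0<..<1} \<Longrightarrow> quantile \<phi> u \<in> pos_set \<phi>"
  unfolding quantile_def
  using the_inv_into_into[OF inj_on_cdf] image_cdf_pos_set interval
  by (metis open_interval_def order_refl)

lemma cdf_quantile: "u \<in> {0<..<1} \<Longrightarrow> cdf \<phi> (quantile \<phi> u) = u"
  unfolding quantile_def
  using f_the_inv_into_f[OF inj_on_cdf] image_cdf_pos_set interval
  by (metis open_interval_def)

end

end

lemma quantile_le_if_cdf_ge:
  assumes "cont_pdf \<phi>a" "open_interval (pos_set \<phi>a)" "bdd_below (pos_set \<phi>a)"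
    and "cont_pdf \<phi>b" "open_interval (pos_set \<phi>b)" "bdd_below (pos_set \<phi>b)"
    and "\<And>t. cdf \<phi>b t \<le> cdf \<phi>a t" and u: "u \<in> {0<..<1}"
  shows "quantile \<phi>a u \<le> quantile \<phi>b u"
proof (rule ccontr)
  assume "\<not> quantile \<phi>a u \<le> quantile \<phi>b u"
  then have "cdf \<phi>a (quantile \<phi>b u) < cdf \<phi>a (quantile \<phi>a u)"
    using assms(1-3) quantile_in_pos_set[OF _ _ _ u] cdf_strict_mono_through_pos_set(1)
    by (simp add: open_interval_def)
  also have "\<dots> = cdf \<phi>b (quantile \<phi>b u)"
    using assms cdf_quantile[OF _ _ _ u] by simp
  finally show False
    using assms(7)[of "quantile \<phi>b u"] by simp
qed

theorem mainTheorem3: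
  fixes \<phi>a \<phi>b \<phi>2 q :: "real \<Rightarrow> real"
  assumes "cont_pdf \<phi>a" and "cont_pdf \<phi>b" and "cont_pdf \<phi>2"
    and "open_interval (pos_set \<phi>a)" and "open_interval (pos_set \<phi>b)"
    and "open_interval (pos_set \<phi>2)"
    and "bdd_below (pos_set \<phi>a)" and "Inf (pos_set \<phi>a) = 0"
    and "bdd_below (pos_set \<phi>b)" and "Inf (pos_set \<phi>b) = 0"
    and "\<forall>t. cdf \<phi>a t \<ge> cdf \<phi>b t"
    and "uniformly_continuous_on UNIV q" and "\<forall>x. 0 \<le> q x" and "q integrable_on UNIV"
    and "(\<lambda>x. x * \<phi>a x / \<phi>2 (Kmap \<phi>2 \<phi>a x) * q (Kmap \<phi>2 \<phi>a x))
           absolutely_integrable_on pos_set \<phi>a"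
    and "(\<lambda>x. x * \<phi>b x / \<phi>2 (Kmap \<phi>2 \<phi>b x) * q (Kmap \<phi>2 \<phi>b x))
           absolutely_integrable_on pos_set \<phi>b"
  shows "integral (pos_set \<phi>a) (\<lambda>x. x * \<phi>a x / \<phi>2 (Kmap \<phi>2 \<phi>a x) * q (Kmap \<phi>2 \<phi>a x))
       \<le> integral (pos_set \<phi>b) (\<lambda>x. x * \<phi>b x / \<phi>2 (Kmap \<phi>2 \<phi>b x) * q (Kmap \<phi>2 \<phi>b x))"
proof -
  define w where "w u = q (quantile \<phi>2 u) / \<phi>2 (quantile \<phi>2 u)" for u
  have integrand: "(\<lambda>x. x * \<phi> x / \<phi>2 (Kmap \<phi>2 \<phi> x) * q (Kmap \<phi>2 \<phi> x))
      = (\<lambda>x. x * \<phi> x * w (cdf \<phi> x))" for \<phi>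
    by (simp add: fun_eq_iff w_def Kmap_eq_quantile_cdf)
  have w_nonneg: "0 \<le> w u" for u
    using assms(3,13) by (simp add: w_def cont_pdf_def)
  have open_a: "open (pos_set \<phi>a)" and open_b: "open (pos_set \<phi>b)"
    using assms(4,5) by (simp_all add: open_interval_def)
  note a = quantile_substitution[OF assms(1) open_a assms(15)[unfolded integrand]]
  note b = quantile_substitution[OF assms(2) open_b assms(16)[unfolded integrand]]
  note image_a = image_cdf_pos_set[OF assms(1,4,7)]
  note image_b = image_cdf_pos_set[OF assms(2,5,9)]
  have "integral {0<..<1} (\<lambda>u. quantile \<phi>a u * w u) \<le> integral {0<..<1} (\<lambda>u. quantile \<phi>b u * w u)"
  proof (rule integral_le)
    show "(\<lambda>u. quantile \<phi>a u * w u) integrable_on {0<..<1}"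
      using a(1) unfolding image_a by (rule set_lebesgue_integral_eq_integral(1))
    show "(\<lambda>u. quantile \<phi>b u * w u) integrable_on {0<..<1}"
      using b(1) unfolding image_b by (rule set_lebesgue_integral_eq_integral(1))
    show "quantile \<phi>a u * w u \<le> quantile \<phi>b u * w u" if "u \<in> {0<..<1}" for u
      using quantile_le_if_cdf_ge[OF assms(1,4,7) assms(2,5,9) _ that] assms(11) w_nonneg
      by (simp add: mult_right_mono)
  qed
  then show ?thesis
    using a(2) b(2) unfolding integrand image_a image_b by simp
qed

end
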